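(* Let $n\geqslant 3$ and fix a caterpillar species tree $S$ with $n$ leaves. Among all caterpillar gene trees $G\neq S$ on the same label set, (i) the largest number of coalescent histories for $(G,S)$ is attained when the roadblock set $B_{G,S}$ consists of the single point $(\frac n2-1,\frac n2-1)$ or $(\frac n2,\frac n2)$ if $n$ is even, or of the single point $(\frac{n-1}{2},\frac{n-1}{2})$ if $n$ is odd; and (ii) this largest number equals $C_{n-1}-C_{\lfloor (n-1)/2\rfloor}C_{\lceil (n-1)/2\rceil}$, where $C_m=\frac{1}{m+1}\binom{2m}{m}$.
   Context: All trees are binary, rooted, leaf-labeled; $G\neq S$ means different labeled topologies. A caterpillar tree with $n$ leaves is one in which some internal node is descended from all other internal nodes. Its canonical label vector $(x_1,\dots,x_n)$ has $x_1,x_2$ the labels of the two cherry leaves and, for $3\leqslant i\leqslant n$, $x_i$ the label of the leaf separated from the root by $n-i+1$ edges. Internal nodes are numbered $1,\dots,n-1$ from cherry to root; internal edge $i$ is the edge above node $i$, with an extra edge $n-1$ above the root. A coalescent history for $(G,S)$ is a map $h$ from internal nodes of $G$ to internal edges of $S$ such that (1) every label of a leaf below node $v$ of $G$ labels a leaf of $S$ below edge $h(v)$, and (2) if $v_2$ is descended from $v_1$ in $G$ then $h(v_2)$ is descended from $h(v_1)$ (objects are descended from themselves). With $\mathbf g,\mathbf s$ the canonical vectors of $G,S$, $\sigma(x)$ the index of $x$ in $\mathbf s$ and $F(j)=\max\{\sigma(g_1),\dots,\sigma(g_{j+1})\}-1$, the roadblock set is $B_{G,S}=\{(i,j)\in\mathbb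 Z^2:1\leqslant j\leqslant i\leqslant n-1,\ i<F(j)\}$. *)

theory Defs
  imports Main "HOL-Library.FuncSet"
begin

(* A caterpillar tree on n leaves is represented by its canonical label vector,
   a distinct list x = [x_1,...,x_n] (0-based: x_k is x ! (k-1)).
   Internal node i (1 <= i <= n-1) has below it exactly the leaves x_1..x_{i+1};
   internal edge i of a species tree is the edge above node i (edge n-1 above the root). *)

definition cat_below :: "'a list \<Rightarrow> nat \<Rightarrow> 'a set" where
  "cat_below x i = set (take (i + 1) x)"

(* labeled topology of a caterpillar: its set of clusters *)
definition cat_clusters :: "'a list \<Rightarrow> 'a set set" where
  "cat_clusters x = {cat_below x i | i. 1 \<le> i \<and> i \<le> length x - 1}"

(* coalescent history for (G,S): node v2 is descended from v1 iff v2 <= v1,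
   edge e2 is descended from e1 iff e2 <= e1 *)
definition is_coal_hist :: "'a list \<Rightarrow> 'a list \<Rightarrow> (nat \<Rightarrow> nat) \<Rightarrow> bool" where
  "is_coal_hist g s h \<longleftrightarrow>
     h \<in> {1..length g - 1} \<rightarrow>\<^sub>E {1..length s - 1} \<and>
     (\<forall>v \<in> {1..length g - 1}. cat_below g v \<subseteq> cat_below s (h v)) \<and>
     (\<forall>v1 \<in> {1..length g - 1}. \<forall>v2 \<in> {1..length g - 1}. v2 \<le> v1 \<longrightarrow> h v2 \<le> h v1)"

definition num_hist :: "'a list \<Rightarrow> 'a list \<Rightarrow> nat" where
  "num_hist g s = card {h. is_coal_hist g s h}"

(* sigma(x): 1-based index of x in s *)
definition sigma :: "'a list \<Rightarrow> 'a \<Rightarrow> nat" where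
  "sigma s x = (THE k. k < length s \<and> s ! k = x) + 1"

definition rbF :: "'a list \<Rightarrow> 'a list \<Rightarrow> nat \<Rightarrow> nat" where
  "rbF g s j = Max {sigma s (g ! k) | k. k \<le> j} - 1"

definition roadblock :: "'a list \<Rightarrow> 'a list \<Rightarrow> (nat \<times> nat) set" where
  "roadblock g s = {(i, j). 1 \<le> j \<and> j \<le> i \<and> i \<le> length g - 1 \<and> i < rbF g s j}"

definition catalan :: "nat \<Rightarrow> nat" where
  "catalan m = ((2 * m) choose m) div (m + 1)"

end

theory Submission
  imports Defs
begin

(* With F = rbF G S, the coalescent histories of caterpillars (G, S) are exactly the monotone maps h
   on the nodes 1..n-1 with F(v) <= h(v) <= n-1.  Always F(v) >= v, with F = id exactly when G = S,
   and for F = id the histories are counted by the Catalan number C_{n-1}.  If G differs from S then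
   F(k) > k for some k, so every history of (G, S) is one for the single roadblock at k (the bound
   that is the identity except for the value k+1 at k).  Those are the histories for the identity
   except the ones with h(k) = k, which split into C_k C_{n-1-k} pairs of histories on 1..k and on
   k+1..n-1.  By log-convexity of the Catalan numbers C_k C_{n-1-k} is smallest for k in the middle. *)

section \<open>Monotone maps above a lower bound\<close>

definition monotone_maps_above :: "(nat \<Rightarrow> nat) \<Rightarrow> nat \<Rightarrow> nat \<Rightarrow> (nat \<Rightarrow> nat) set" where
  "monotone_maps_above F m c = {h \<in> {1..m} \<rightarrow>\<^sub>E UNIV.
     (\<forall>v\<in>{1..m}. F v \<le> h v \<and> h v \<le> c) \<and> (\<forall>v\<in>{1..m}. \<forall>w\<in>{1..m}. w \<le> v \<longrightarrow> h w \<le> h v)}"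

primrec count_monotone :: "(nat \<Rightarrow> nat) \<Rightarrow> nat \<Rightarrow> nat \<Rightarrow> nat" where
  "count_monotone F 0 c = 1"
| "count_monotone F (Suc m) c = (\<Sum>e = F (Suc m)..c. count_monotone F m e)"

lemma finite_monotone_maps_above: "finite (monotone_maps_above F m c)"
proof (rule finite_subset)
  show "monotone_maps_above F m c \<subseteq> {1..m} \<rightarrow>\<^sub>E {0..c}"
    unfolding monotone_maps_above_def by (auto simp: PiE_iff extensional_def)
qed (simp add: finite_PiE)

lemma monotone_maps_above_0: "monotone_maps_above F 0 c = {\<lambda>_. undefined}"
  unfolding monotone_maps_above_def by auto

lemma monotone_maps_above_Suc:
  "monotone_maps_above F (Suc m) c =
     (\<Union>e\<in>{F (Suc m)..c}. (\<lambda>h. h(Suc m := e)) ` monotone_maps_above F m e)"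
proof (intro equalityI subsetI)
  fix h assume h: "h \<in> monotone_maps_above F (Suc m) c"
  then have "h (Suc m) \<in> {F (Suc m)..c}"
    and "h(Suc m := undefined) \<in> monotone_maps_above F m (h (Suc m))"
    unfolding monotone_maps_above_def by (auto simp: PiE_iff extensional_def)
  then show "h \<in> (\<Union>e\<in>{F (Suc m)..c}. (\<lambda>h. h(Suc m := e)) ` monotone_maps_above F m e)"
    by (intro UN_I image_eqI[where x = "h(Suc m := undefined)"]) auto
next
  fix h assume "h \<in> (\<Union>e\<in>{F (Suc m)..c}. (\<lambda>h. h(Suc m := e)) ` monotone_maps_above F m e)"
  then obtain e h' where "e \<in> {F (Suc m)..c}" "h' \<in> monotone_maps_above F m e" "h = h'(Suc m := e)"
    by blast
  moreover from calculation have "\<forall>v\<in>{1..m}. h' v \<le> c"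
    unfolding monotone_maps_above_def by auto
  ultimately show "h \<in> monotone_maps_above F (Suc m) c"
    unfolding monotone_maps_above_def by (auto simp: PiE_iff extensional_def le_Suc_eq)
qed

lemma card_monotone_maps_above: "card (monotone_maps_above F m c) = count_monotone F m c"
proof (induction m arbitrary: c)
  case 0
  then show ?case by (simp add: monotone_maps_above_0)
next
  case (Suc m)
  have inj: "inj_on (\<lambda>h. h(Suc m := e)) (monotone_maps_above F m e)" for e
  proof (rule inj_onI)
    fix h h' assume "h \<in> monotone_maps_above F m e" "h' \<in> monotone_maps_above F m e"
      and "h(Suc m := e) = h'(Suc m := e)"
    moreover from calculation have "h (Suc m) = h' (Suc m)"
      unfolding monotone_maps_above_def by (auto simp: PiE_iff extensional_def)
    ultimately show "h = h'" by (metis fun_upd_triv fun_upd_upd)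
  qed
  have "card (monotone_maps_above F (Suc m) c) =
      (\<Sum>e = F (Suc m)..c. card ((\<lambda>h. h(Suc m := e)) ` monotone_maps_above F m e))"
    unfolding monotone_maps_above_Suc
    by (rule card_UN_disjoint) (auto simp: finite_monotone_maps_above dest!: fun_cong[where x = "Suc m"])
  also have "\<dots> = (\<Sum>e = F (Suc m)..c. count_monotone F m e)"
    by (simp add: card_image[OF inj] Suc.IH)
  finally show ?case by simp
qed

lemma count_monotone_cong: "\<forall>v\<in>{1..m}. F v = G v \<Longrightarrow> count_monotone F m c = count_monotone G m c"
  by (induction m arbitrary: c) auto

lemma monotone_maps_above_antimono:
  "\<forall>v\<in>{1..m}. G v \<le> F v \<Longrightarrow> monotone_maps_above F m c \<subseteq> monotone_maps_above G m c"
  unfolding monotone_maps_above_def by (auto intro: order_trans)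

lemma count_monotone_antimono:
  "\<forall>v\<in>{1..m}. G v \<le> F v \<Longrightarrow> count_monotone F m c \<le> count_monotone G m c"
  unfolding card_monotone_maps_above[symmetric]
  by (intro card_mono finite_monotone_maps_above monotone_maps_above_antimono)

text \<open>A monotone lower bound is itself the least monotone map above it, so it can only be raised
  at the cost of losing maps.\<close>

lemma count_monotone_eq_imp_eq:
  assumes le: "\<forall>v\<in>{1..m}. G v \<le> F v"
    and mono: "\<forall>v\<in>{1..m}. \<forall>w\<in>{1..m}. w \<le> v \<longrightarrow> G w \<le> G v" and bounded: "\<forall>v\<in>{1..m}. G v \<le> c"
    and eq: "count_monotone F m c = count_monotone G m c"
  shows "\<forall>v\<in>{1..m}. F v = G v"
proof -
  have "monotone_maps_above F m c = monotone_maps_above G m c"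
    using eq unfolding card_monotone_maps_above[symmetric]
    by (intro card_subset_eq finite_monotone_maps_above monotone_maps_above_antimono le)
  moreover have "restrict G {1..m} \<in> monotone_maps_above G m c"
    using mono bounded unfolding monotone_maps_above_def by auto
  ultimately have "restrict G {1..m} \<in> monotone_maps_above F m c"
    by simp
  then have "\<forall>v\<in>{1..m}. F v \<le> G v"
    unfolding monotone_maps_above_def by auto
  with le show ?thesis by (auto intro: antisym)
qed

section \<open>Ballot and Catalan numbers\<close>

text \<open>The ballot numbers: for \<open>m \<le> c + 1\<close> they count the monotone maps \<open>h\<close> on \<open>1..m\<close>
  with \<open>v \<le> h v \<le> c\<close>.\<close>

definition ballot :: "nat \<Rightarrow> nat \<Rightarrow> int" where
  "ballot m c = int ((c + m) choose m) - (if m = 0 then 0 else int ((c + m) choose (m - 1)))"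

lemma ballot_Suc_diag: "ballot (Suc m) m = 0"
proof -
  have "Suc (2 * m) choose m = Suc (2 * m) choose (Suc (2 * m) - m)"
    by (rule binomial_symmetric) simp
  then show ?thesis unfolding ballot_def by (simp add: Suc_diff_le mult_2)
qed

lemma ballot_Suc_Suc: "ballot (Suc m) (Suc c) = ballot (Suc m) c + ballot m (Suc c)"
  by (cases m) (simp_all add: ballot_def)

lemma count_monotone_id: "m \<le> Suc c \<Longrightarrow> int (count_monotone id m c) = ballot m c"
proof (induction m arbitrary: c)
  case 0
  then show ?case by (simp add: ballot_def)
next
  case (Suc m)
  note outer = Suc.IH
  from Suc.prems obtain d where c: "c = m + d" using le_Suc_ex by fastforce
  have "int (count_monotone id (Suc m) (m + d)) = ballot (Suc m) (m + d)"
  proof (induction d)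
    case 0
    then show ?case by (simp add: ballot_Suc_diag)
  next
    case (Suc d)
    have "count_monotone id (Suc m) (m + Suc d) =
        count_monotone id (Suc m) (m + d) + count_monotone id m (m + Suc d)"
      by (simp add: atLeastAtMostSuc_conv add.commute)
    moreover have "int (count_monotone id m (Suc (m + d))) = ballot m (Suc (m + d))"
      by (rule outer) simp
    ultimately show ?case using Suc.IH by (simp only: ballot_Suc_Suc add_Suc_right of_nat_add)
  qed
  then show ?case unfolding c .
qed

lemma Suc_times_count_monotone_id_diag: "Suc m * count_monotone id m m = (2 * m) choose m"
proof (cases m)
  case (Suc k)
  define Z where "Z = (2 * m) choose m"
  define X where "X = (2 * m) choose k"
  have "m \<noteq> 0" "m - 1 = k" "2 * m - k = Suc m" using Suc by simp_all
  then have "int (count_monotone id m m) = int Z - int X"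
    using count_monotone_id[of m m] unfolding ballot_def Z_def X_def mult_2 by simp
  moreover have "int (Suc m) * int X = int m * int Z"
  proof -
    have "Suc m * X = 2 * m * ((2 * m - 1) choose k)"
      unfolding X_def \<open>2 * m - k = Suc m\<close>[symmetric] by (rule binomial_absorb_comp)
    also have "\<dots> = m * Z"
      using binomial_absorption[of k "2 * m"] unfolding Z_def Suc[symmetric] by (rule sym)
    finally show ?thesis by (simp only: of_nat_mult[symmetric] of_nat_eq_iff)
  qed
  ultimately have "int (Suc m * count_monotone id m m) = int (Suc m) * int Z - int m * int Z"
    by (simp only: of_nat_mult right_diff_distrib)
  then have "int (Suc m * count_monotone id m m) = int Z"
    by (simp add: algebra_simps)
  then show ?thesis unfolding Z_def by (simp only: of_nat_eq_iff)
qed simp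

lemma catalan_eq_count_monotone_id: "catalan m = count_monotone id m m"
  unfolding catalan_def Suc_times_count_monotone_id_diag[symmetric] Suc_eq_plus1
  by (rule nonzero_mult_div_cancel_left) simp

lemma Suc_times_catalan: "Suc m * catalan m = (2 * m) choose m"
  by (simp only: catalan_eq_count_monotone_id Suc_times_count_monotone_id_diag)

lemma catalan_pos: "catalan m > 0"
proof -
  have "0 < Suc m * catalan m"
    unfolding Suc_times_catalan by simp
  then show ?thesis by (rule nat_0_less_mult_iff[THEN iffD1, THEN conjunct2])
qed

lemma central_binomial_Suc: "Suc k * ((2 * Suc k) choose Suc k) = 2 * (2 * k + 1) * ((2 * k) choose k)"
proof -
  have sym: "Suc (2 * k) choose k = Suc (2 * k) choose Suc k"
    using binomial_symmetric[of k "Suc (2 * k)"] by (simp add: Suc_diff_le del: binomial_Suc_Suc)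
  have "Suc k * (Suc k * ((2 * Suc k) choose Suc k)) = Suc k * (2 * Suc k * (Suc (2 * k) choose k))"
    using Suc_times_binomial[of k "Suc (2 * k)"] by (simp del: binomial_Suc_Suc)
  also have "\<dots> = 2 * Suc k * ((Suc (2 * k) choose Suc k) * Suc k)"
    unfolding sym by (simp only: ac_simps)
  also have "\<dots> = Suc k * (2 * (2 * k + 1) * ((2 * k) choose k))"
    unfolding Suc_times_binomial_eq[symmetric] by (simp only: ac_simps) simp
  finally show ?thesis by (simp only: mult_cancel1) simp
qed

lemma catalan_Suc: "(k + 2) * catalan (Suc k) = 2 * (2 * k + 1) * catalan k"
proof -
  have "k + 2 = Suc (Suc k)" by simp
  then have "Suc k * ((k + 2) * catalan (Suc k)) = Suc k * ((2 * Suc k) choose Suc k)"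
    by (simp only: Suc_times_catalan)
  also have "\<dots> = 2 * (2 * k + 1) * (Suc k * catalan k)"
    by (simp only: central_binomial_Suc Suc_times_catalan)
  also have "\<dots> = Suc k * (2 * (2 * k + 1) * catalan k)"
    by (simp only: mult_ac)
  finally show ?thesis by (simp only: mult_cancel1) simp
qed

lemma catalan_log_convex:
  assumes "j < l"
  shows "catalan (Suc j) * catalan l < catalan j * catalan (Suc l)"
proof -
  define x where "x = catalan j * catalan l"
  have "(2 * j + 1) * (l + 2) < (2 * l + 1) * (j + 2)"
    using assms by (simp add: algebra_simps)
  then have "(2 * j + 1) * (l + 2) * x < (2 * l + 1) * (j + 2) * x"
    using catalan_pos[of j] catalan_pos[of l] unfolding x_def by (intro mult_strict_right_mono) simp_all
  moreover have "(j + 2) * (l + 2) * (catalan (Suc j) * catalan l) = 2 * ((2 * j + 1) * (l + 2) * x)"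
  proof -
    have "(j + 2) * (l + 2) * (catalan (Suc j) * catalan l) =
        ((j + 2) * catalan (Suc j)) * (l + 2) * catalan l"
      by (simp only: mult_ac)
    then show ?thesis unfolding catalan_Suc x_def by (simp only: mult_ac)
  qed
  moreover have "(j + 2) * (l + 2) * (catalan j * catalan (Suc l)) = 2 * ((2 * l + 1) * (j + 2) * x)"
  proof -
    have "(j + 2) * (l + 2) * (catalan j * catalan (Suc l)) =
        ((l + 2) * catalan (Suc l)) * (j + 2) * catalan j"
      by (simp only: mult_ac)
    then show ?thesis unfolding catalan_Suc x_def by (simp only: mult_ac)
  qed
  ultimately have "(j + 2) * (l + 2) * (catalan (Suc j) * catalan l) <
      (j + 2) * (l + 2) * (catalan j * catalan (Suc l))"
    by simp
  then show ?thesis by (rule mult_less_cancel1[THEN iffD1, THEN conjunct2])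
qed

lemma catalan_product_Suc_less:
  "2 * k + 1 < m \<Longrightarrow> catalan (Suc k) * catalan (m - Suc k) < catalan k * catalan (m - k)"
  using catalan_log_convex[of k "m - Suc k"] by (simp add: Suc_diff_Suc)

lemma catalan_product_min:
  assumes "k \<le> m"
  defines "a \<equiv> m div 2"
  shows "catalan a * catalan (m - a) \<le> catalan k * catalan (m - k)
    \<and> (catalan k * catalan (m - k) = catalan a * catalan (m - a) \<longrightarrow> k = a \<or> k = m - a)"
proof -
  define P where "P k = catalan k * catalan (m - k)" for k
  have left: "P a \<le> P k \<and> (k < a \<longrightarrow> P a < P k)" if "k \<le> a" for k
    using that
  proof (induction k rule: inc_induct)
    case (step k)
    have "P (Suc k) < P k"
      unfolding P_def using step.hyps unfolding a_def by (intro catalan_product_Suc_less) linarith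
    with step.IH show ?case by auto
  qed simp
  show ?thesis
    unfolding P_def[symmetric]
  proof (cases "k \<le> a")
    case True
    then show "P a \<le> P k \<and> (P k = P a \<longrightarrow> k = a \<or> k = m - a)"
      using left[of k] by auto
  next
    case False
    then have "m - k \<le> a" "P (m - k) = P k" unfolding a_def P_def using assms(1) by auto
    then show "P a \<le> P k \<and> (P k = P a \<longrightarrow> k = a \<or> k = m - a)"
      using left[of "m - k"] assms(1) by auto
  qed
qed

section \<open>Single roadblocks\<close>

definition single_roadblock :: "nat \<Rightarrow> nat \<Rightarrow> nat" where
  "single_roadblock k v = (if v = k then Suc k else v)"

text \<open>The maps for the identity with \<open>h k = k\<close> are pairs of a map on \<open>1..k\<close> and a map on
  \<open>k+1..m\<close>; the others are the maps for the single roadblock at \<open>k\<close>.\<close>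

lemma count_monotone_id_split:
  assumes "1 \<le> k"
  shows "count_monotone id (k + j) (k + d) =
    count_monotone (single_roadblock k) (k + j) (k + d) + count_monotone id k k * count_monotone id j d"
proof (induction j arbitrary: d)
  case 0
  obtain k' where k: "k = Suc k'" using assms by (cases k) auto
  have below: "count_monotone (single_roadblock k) k' e = count_monotone id k' e" for e
    by (rule count_monotone_cong) (auto simp: single_roadblock_def k)
  have "count_monotone id k (k + d) = count_monotone id k' k + (\<Sum>e = Suc k..k + d. count_monotone id k' e)"
    by (simp add: k sum.atLeast_Suc_atMost)
  also have "(\<Sum>e = Suc k..k + d. count_monotone id k' e) = count_monotone (single_roadblock k) k (k + d)"
  proof -
    have "count_monotone (single_roadblock k) k (k + d) =
        (\<Sum>e = single_roadblock k k..k + d. count_monotone (single_roadblock k) k' e)"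
      by (simp only: k count_monotone.simps)
    also have "\<dots> = (\<Sum>e = Suc k..k + d. count_monotone id k' e)"
      by (simp only: below) (simp add: single_roadblock_def)
    finally show ?thesis by simp
  qed
  also have "count_monotone id k' k = count_monotone id k k"
    by (simp add: k)
  finally show ?case by (simp add: id_def)
next
  case (Suc j)
  have shift: "(\<Sum>e = Suc (k + j)..k + d. f e) = (\<Sum>e = Suc j..d. f (k + e))" for f :: "nat \<Rightarrow> nat"
    using sum.shift_bounds_cl_nat_ivl[of f "Suc j" k d] by (simp add: add.commute)
  have "count_monotone id (k + Suc j) (k + d) = (\<Sum>e = Suc j..d. count_monotone id (k + j) (k + e))"
    by (simp add: shift)
  also have "\<dots> = (\<Sum>e = Suc j..d. count_monotone (single_roadblock k) (k + j) (k + e)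
      + count_monotone id k k * count_monotone id j e)"
    by (simp only: Suc.IH)
  also have "\<dots> = (\<Sum>e = Suc j..d. count_monotone (single_roadblock k) (k + j) (k + e))
      + count_monotone id k k * count_monotone id (Suc j) d"
    by (simp add: sum.distrib sum_distrib_left)
  also have "(\<Sum>e = Suc j..d. count_monotone (single_roadblock k) (k + j) (k + e)) =
      count_monotone (single_roadblock k) (k + Suc j) (k + d)"
    by (simp add: shift single_roadblock_def)
  finally show ?case .
qed

lemma count_single_roadblock:
  assumes "1 \<le> k" "k \<le> m"
  shows "count_monotone (single_roadblock k) m m + catalan k * catalan (m - k) = catalan m"
  using count_monotone_id_split[OF assms(1), of "m - k" "m - k"] assms(2)
  by (simp add: catalan_eq_count_monotone_id)

lemma count_monotone_le_single_roadblock: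
  assumes bounds: "\<forall>v\<in>{1..m}. v \<le> F v \<and> F v \<le> m" and k: "k \<in> {1..m}" "F k \<noteq> k"
  shows "count_monotone F m m \<le> count_monotone (single_roadblock k) m m
    \<and> (count_monotone F m m = count_monotone (single_roadblock k) m m \<longrightarrow>
         (\<forall>v\<in>{1..m}. F v = single_roadblock k v))"
proof -
  have "k \<le> F k" "F k \<le> m" using bounds k(1) by blast+
  with k(2) have "k < F k" by simp
  have le: "\<forall>v\<in>{1..m}. single_roadblock k v \<le> F v"
    using bounds \<open>k < F k\<close> by (auto simp: single_roadblock_def)
  have "\<forall>v\<in>{1..m}. \<forall>w\<in>{1..m}. w \<le> v \<longrightarrow> single_roadblock k w \<le> single_roadblock k v"
    "\<forall>v\<in>{1..m}. single_roadblock k v \<le> m"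
    using \<open>k < F k\<close> \<open>F k \<le> m\<close> by (auto simp: single_roadblock_def)
  with le show ?thesis
    using count_monotone_antimono[OF le] count_monotone_eq_imp_eq[OF le] by blast
qed

lemma count_monotone_max:
  assumes bounds: "\<forall>v\<in>{1..m}. v \<le> F v \<and> F v \<le> m" and k: "k \<in> {1..m}" "F k \<noteq> k"
  defines "a \<equiv> m div 2"
  shows "count_monotone F m m \<le> catalan m - catalan a * catalan (m - a)
    \<and> (count_monotone F m m = catalan m - catalan a * catalan (m - a) \<longleftrightarrow>
         (\<exists>k\<in>{a, m - a}. \<forall>v\<in>{1..m}. F v = single_roadblock k v))"
proof -
  define P where "P k = catalan k * catalan (m - k)" for k
  have "k \<le> F k" "F k \<le> m" using bounds k(1) by blast+
  with k(2) have "k < m" by simp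
  then have a: "1 \<le> a" "a \<le> m" "1 \<le> m - a" unfolding a_def using k by auto
  have count: "count_monotone (single_roadblock k) m m = catalan m - P k" "P k \<le> catalan m"
    if "1 \<le> k" "k \<le> m" for k
    using count_single_roadblock[OF that] unfolding P_def by auto
  have Pk: "P a \<le> P k" "P k = P a \<longrightarrow> k = a \<or> k = m - a"
    using catalan_product_min[of k m] k unfolding a_def P_def by auto
  have below: "count_monotone F m m \<le> catalan m - P k"
    "count_monotone F m m = catalan m - P k \<Longrightarrow> \<forall>v\<in>{1..m}. F v = single_roadblock k v"
    using count_monotone_le_single_roadblock[OF bounds k] count[of k] k by auto
  show ?thesis
    unfolding P_def[symmetric]
  proof (intro conjI iffI)
    show "count_monotone F m m \<le> catalan m - P a"
      using below(1) Pk(1) by linarith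
  next
    assume "count_monotone F m m = catalan m - P a"
    moreover have "P a \<le> catalan m" "P k \<le> catalan m" using count(2) a k by auto
    ultimately have "count_monotone F m m = catalan m - P k" "P k = P a"
      using below(1) Pk(1) by linarith+
    then show "\<exists>k\<in>{a, m - a}. \<forall>v\<in>{1..m}. F v = single_roadblock k v"
      using below(2) Pk(2) by blast
  next
    assume "\<exists>k\<in>{a, m - a}. \<forall>v\<in>{1..m}. F v = single_roadblock k v"
    then obtain k' where k': "k' \<in> {a, m - a}" "\<forall>v\<in>{1..m}. F v = single_roadblock k' v" by blast
    have "P (m - a) = P a" unfolding P_def using a by simp
    with k' a count(1)[of k'] show "count_monotone F m m = catalan m - P a"
      using count_monotone_cong[OF k'(2)] by auto
  qed
qed

section \<open>Caterpillar gene and species trees\<close>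

lemma sigma_nth: "distinct s \<Longrightarrow> i < length s \<Longrightarrow> sigma s (s ! i) = Suc i"
  unfolding sigma_def by (subst the_equality[of _ i]) (auto simp: nth_eq_iff_index_eq)

lemma mem_cat_below_iff:
  assumes "distinct s" "x \<in> set s"
  shows "x \<in> cat_below s e \<longleftrightarrow> sigma s x \<le> Suc e"
proof -
  obtain i where i: "i < length s" "s ! i = x" using assms(2) by (auto simp: in_set_conv_nth)
  have "x \<in> cat_below s e \<longleftrightarrow> (\<exists>j < min (Suc e) (length s). s ! j = x)"
    unfolding cat_below_def by (auto simp: in_set_conv_nth)
  also have "\<dots> \<longleftrightarrow> i < Suc e"
    using i assms(1) by (auto simp: nth_eq_iff_index_eq)
  finally show ?thesis using sigma_nth[OF assms(1) i(1)] i(2) by (simp add: less_Suc_eq_le)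
qed

lemma card_cat_below: "distinct x \<Longrightarrow> v < length x \<Longrightarrow> card (cat_below x v) = Suc v"
  unfolding cat_below_def by (simp add: distinct_card)

lemma cat_below_eq_image_nth: "v < length x \<Longrightarrow> cat_below x v = (!) x ` {..v}"
  unfolding cat_below_def using nth_image[of "Suc v" x] by (simp add: atLeast0LessThan lessThan_Suc_atMost)

locale caterpillar_pair =
  fixes g s :: "'a list"
  assumes length_eq: "length g = length s"
    and distinct_g: "distinct g" and distinct_s: "distinct s" and set_eq: "set g = set s"
begin

lemma cat_below_subset_iff_rbF_le:
  assumes "v < length g"
  shows "cat_below g v \<subseteq> cat_below s e \<longleftrightarrow> rbF g s v \<le> e"
proof -
  have image: "{sigma s (g ! k) |k. k \<le> v} = (\<lambda>k. sigma s (g ! k)) ` {..v}" by auto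
  have in_s: "g ! k \<in> set s" if "k \<le> v" for k
    using that assms set_eq by (metis nth_mem order_le_less_trans)
  have "rbF g s v \<le> e \<longleftrightarrow> Max ((\<lambda>k. sigma s (g ! k)) ` {..v}) \<le> Suc e"
    unfolding rbF_def image by arith
  also have "\<dots> \<longleftrightarrow> (\<forall>k\<le>v. sigma s (g ! k) \<le> Suc e)"
    by (auto simp: Max_le_iff)
  also have "\<dots> \<longleftrightarrow> (\<forall>k\<le>v. g ! k \<in> cat_below s e)"
    using in_s mem_cat_below_iff[OF distinct_s] by blast
  also have "\<dots> \<longleftrightarrow> cat_below g v \<subseteq> cat_below s e"
    unfolding cat_below_eq_image_nth[OF assms] by auto
  finally show ?thesis by simp
qed

lemma rbF_bounds:
  assumes "v < length g"
  shows "v \<le> rbF g s v \<and> rbF g s v \<le> length s - 1"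
proof
  have "cat_below s (length s - 1) = set s"
    using assms length_eq unfolding cat_below_def by simp
  then have "cat_below g v \<subseteq> cat_below s (length s - 1)"
    using set_take_subset[of "Suc v" g] set_eq unfolding cat_below_def by simp
  then show "rbF g s v \<le> length s - 1"
    using cat_below_subset_iff_rbF_le[OF assms] by blast
  have "cat_below g v \<subseteq> cat_below s (rbF g s v)"
    using cat_below_subset_iff_rbF_le[OF assms] by blast
  then have "card (cat_below g v) \<le> card (cat_below s (rbF g s v))"
    by (intro card_mono) (simp_all add: cat_below_def)
  also have "\<dots> \<le> Suc (rbF g s v)"
    unfolding cat_below_def using card_length[of "take (Suc (rbF g s v)) s"] by simp
  finally show "v \<le> rbF g s v"
    using card_cat_below[OF distinct_g assms] by simp
qed

lemma rbF_eq_self_iff: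
  assumes "v < length g"
  shows "rbF g s v = v \<longleftrightarrow> cat_below g v = cat_below s v"
proof
  assume "rbF g s v = v"
  then have "cat_below g v \<subseteq> cat_below s v"
    using cat_below_subset_iff_rbF_le[OF assms] by simp
  moreover have "card (cat_below g v) = card (cat_below s v)"
    using card_cat_below[OF distinct_g assms] card_cat_below[OF distinct_s, of v] assms length_eq
    by simp
  ultimately show "cat_below g v = cat_below s v"
    by (intro card_subset_eq) (simp_all add: cat_below_def)
next
  assume "cat_below g v = cat_below s v"
  then have "rbF g s v \<le> v"
    using cat_below_subset_iff_rbF_le[OF assms, of v] by simp
  with rbF_bounds[OF assms] show "rbF g s v = v" by simp
qed

lemma cat_clusters_eq_iff: "cat_clusters g = cat_clusters s \<longleftrightarrow> (\<forall>v\<in>{1..length s - 1}. rbF g s v = v)"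
proof
  assume eq: "cat_clusters g = cat_clusters s"
  show "\<forall>v\<in>{1..length s - 1}. rbF g s v = v"
  proof
    fix v assume v: "v \<in> {1..length s - 1}"
    then have vg: "v < length g" using length_eq by auto
    have "cat_below g v \<in> cat_clusters s"
      using eq v length_eq unfolding cat_clusters_def by auto
    then obtain i where i: "i \<in> {1..length s - 1}" "cat_below g v = cat_below s i"
      unfolding cat_clusters_def by auto
    then have "i = v"
      using card_cat_below[OF distinct_g vg] card_cat_below[OF distinct_s, of i] by auto
    with i vg show "rbF g s v = v" using rbF_eq_self_iff by simp
  qed
next
  assume id: "\<forall>v\<in>{1..length s - 1}. rbF g s v = v"
  have "cat_below g v = cat_below s v" if "v \<in> {1..length s - 1}" for v
  proof -
    have "v < length g" using that length_eq by auto
    then show ?thesis using rbF_eq_self_iff id[rule_format, OF that] by simp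
  qed
  then show "cat_clusters g = cat_clusters s"
    unfolding cat_clusters_def length_eq by force
qed

lemma num_hist_eq_count_monotone:
  "num_hist g s = count_monotone (rbF g s) (length s - 1) (length s - 1)"
proof -
  let ?m = "length s - 1"
  have vg: "v < length g" if "v \<in> {1..?m}" for v
    using that length_eq by auto
  have subset_iff: "(\<forall>v\<in>{1..?m}. cat_below g v \<subseteq> cat_below s (h v)) \<longleftrightarrow>
      (\<forall>v\<in>{1..?m}. rbF g s v \<le> h v)" for h using cat_below_subset_iff_rbF_le vg by blast
  have pos: "1 \<le> rbF g s v" if "v \<in> {1..?m}" for v
    using rbF_bounds[OF vg[OF that]] that by auto
  have range: "h \<in> {1..?m} \<rightarrow>\<^sub>E {1..?m} \<longleftrightarrow>
      h \<in> {1..?m} \<rightarrow>\<^sub>E UNIV \<and> (\<forall>v\<in>{1..?m}. 1 \<le> h v \<and> h v \<le> ?m)" for h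
    by (auto simp: PiE_iff)
  have "(\<forall>v\<in>{1..?m}. rbF g s v \<le> h v) \<Longrightarrow> (\<forall>v\<in>{1..?m}. 1 \<le> h v)" for h
    using pos order_trans by blast
  then have "is_coal_hist g s h \<longleftrightarrow> h \<in> monotone_maps_above (rbF g s) ?m ?m" for h
    unfolding is_coal_hist_def monotone_maps_above_def length_eq subset_iff range by blast
  then have "{h. is_coal_hist g s h} = monotone_maps_above (rbF g s) ?m ?m" by blast
  then show ?thesis unfolding num_hist_def by (simp add: card_monotone_maps_above)
qed

lemma roadblock_eq_singleton_iff:
  assumes k: "1 \<le> k" "k < length s - 1"
  shows "roadblock g s = {(k, k)} \<longleftrightarrow> (\<forall>v\<in>{1..length s - 1}. rbF g s v = single_roadblock k v)"
proof
  assume eq: "roadblock g s = {(k, k)}"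
  have mem: "1 \<le> j \<and> j \<le> i \<and> i \<le> length s - 1 \<and> i < rbF g s j \<longleftrightarrow> i = k \<and> j = k" for i j
  proof -
    have "1 \<le> j \<and> j \<le> i \<and> i \<le> length s - 1 \<and> i < rbF g s j \<longleftrightarrow> (i, j) \<in> roadblock g s"
      unfolding roadblock_def length_eq by simp
    then show ?thesis using eq by simp
  qed
  show "\<forall>v\<in>{1..length s - 1}. rbF g s v = single_roadblock k v"
  proof
    fix v assume v: "v \<in> {1..length s - 1}"
    then have bounds: "v \<le> rbF g s v" "rbF g s v \<le> length s - 1"
      using rbF_bounds[of v] length_eq by auto
    show "rbF g s v = single_roadblock k v"
    proof (cases "v = k")
      case True
      have "k < rbF g s k" using mem[of k k] k by simp
      moreover have "\<not> Suc k < rbF g s k"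
      proof
        assume "Suc k < rbF g s k"
        with k show False using mem[where i = "Suc k" and j = k] by simp
      qed
      ultimately show ?thesis using True by (simp add: single_roadblock_def)
    next
      case False
      then show ?thesis using mem[of v v] v bounds by (auto simp: single_roadblock_def)
    qed
  qed
next
  assume F: "\<forall>v\<in>{1..length s - 1}. rbF g s v = single_roadblock k v"
  show "roadblock g s = {(k, k)}"
  proof (rule set_eqI, clarify)
    fix i j
    show "(i, j) \<in> roadblock g s \<longleftrightarrow> (i, j) \<in> {(k, k)}"
    proof (cases "1 \<le> j \<and> j \<le> length s - 1")
      case True
      then show ?thesis
        using F k unfolding roadblock_def length_eq by (auto simp: single_roadblock_def)
    next
      case False
      then show ?thesis using k unfolding roadblock_def length_eq by auto
    qed
  qed
qed

lemma num_hist_max: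
  assumes "cat_clusters g \<noteq> cat_clusters s"
  defines "m \<equiv> length s - 1"
  defines "a \<equiv> m div 2"
  shows "num_hist g s \<le> catalan m - catalan a * catalan (m - a)
    \<and> (num_hist g s = catalan m - catalan a * catalan (m - a) \<longleftrightarrow>
         roadblock g s \<in> {{(a, a)}, {(m - a, m - a)}})"
proof -
  have bounds: "\<forall>v\<in>{1..m}. v \<le> rbF g s v \<and> rbF g s v \<le> m"
  proof
    fix v assume "v \<in> {1..m}"
    then have "v < length g" using length_eq unfolding m_def by auto
    then show "v \<le> rbF g s v \<and> rbF g s v \<le> m" using rbF_bounds unfolding m_def by blast
  qed
  obtain k where k: "k \<in> {1..m}" "rbF g s k \<noteq> k"
    using assms(1) cat_clusters_eq_iff unfolding m_def by blast
  moreover have "k \<le> rbF g s k" "rbF g s k \<le> m" using bounds k(1) by blast+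
  ultimately have "2 \<le> m" by simp
  then have "1 \<le> a" "a < m" "1 \<le> m - a" "m - a < m" unfolding a_def by auto
  then have "(\<exists>k\<in>{a, m - a}. \<forall>v\<in>{1..m}. rbF g s v = single_roadblock k v) \<longleftrightarrow>
      roadblock g s \<in> {{(a, a)}, {(m - a, m - a)}}"
    using roadblock_eq_singleton_iff unfolding m_def by auto
  with count_monotone_max[OF bounds k] show ?thesis
    unfolding num_hist_eq_count_monotone m_def[symmetric] a_def by simp
qed

end

text \<open>Transposing the labels at positions \<open>a\<close> and \<open>a + 1\<close> of the species vector realizes the single
  roadblock at \<open>a\<close>.\<close>

lemma exists_single_roadblock:
  assumes s: "distinct s" and a: "1 \<le> a" "Suc a < length s"
  shows "\<exists>t. length t = length s \<and> distinct t \<and> set t = set s \<and>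
    cat_clusters t \<noteq> cat_clusters s \<and> roadblock t s = {(a, a)}"
proof -
  define t where "t = s[a := s ! Suc a, Suc a := s ! a]"
  have t: "length t = length s" "distinct t" "set t = set s"
    unfolding t_def using s a by (simp_all add: distinct_swap set_swap)
  interpret caterpillar_pair t s
    using t s by unfold_locales auto
  have take: "take (Suc v) t = (take (Suc v) s)[a := s ! Suc a, Suc a := s ! a]" for v
    unfolding t_def by (simp add: take_update_swap)
  have other: "cat_below t v = cat_below s v" if "v \<noteq> a" "v < length s" for v
  proof (cases "v < a")
    case True
    then show ?thesis
      unfolding cat_below_def Suc_eq_plus1[symmetric] take by (simp add: list_update_beyond)
  next
    case False
    then have "s ! a = take (Suc v) s ! a" "s ! Suc a = take (Suc v) s ! Suc a"
      "Suc a < length (take (Suc v) s)"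
      using that a by auto
    then show ?thesis
      unfolding cat_below_def Suc_eq_plus1[symmetric] take by (simp only: set_swap)
  qed
  have "take (Suc a) t = (take (Suc a) s)[a := s ! Suc a]"
    unfolding take by (simp add: list_update_beyond)
  then have "s ! Suc a \<in> cat_below t a" "cat_below t a \<subseteq> cat_below s (Suc a)"
    unfolding cat_below_def using a set_update_subset_insert[of "take (Suc a) s" a]
    by (auto simp: set_update_memI take_Suc_conv_app_nth)
  moreover have "s ! Suc a \<notin> cat_below s a"
    using mem_cat_below_iff[OF s] sigma_nth[OF s a(2)] a(2) by simp
  ultimately have "rbF t s a \<le> Suc a" "rbF t s a \<noteq> a"
    using cat_below_subset_iff_rbF_le rbF_eq_self_iff t(1) a by auto
  moreover have "a \<le> rbF t s a"
    using rbF_bounds t(1) a by simp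
  ultimately have "rbF t s a = Suc a" by simp
  then have "\<forall>v\<in>{1..length s - 1}. rbF t s v = single_roadblock a v"
    using rbF_eq_self_iff other t(1) by (auto simp: single_roadblock_def)
  then have "roadblock t s = {(a, a)}"
    using roadblock_eq_singleton_iff[of a] a by simp
  moreover have "cat_clusters t \<noteq> cat_clusters s"
    using cat_clusters_eq_iff \<open>rbF t s a = Suc a\<close> a by auto
  ultimately show ?thesis using t by blast
qed

lemma diff_half_pred: "n - 1 - (n - 1) div 2 = (n::nat) div 2"
  by (cases "even n") (auto elim!: evenE oddE)

lemma middle_diagonal_points:
  "(if even n then {{(n div 2 - 1, n div 2 - 1)}, {(n div 2, n div 2)}}
      else {{((n - 1) div 2, (n - 1) div 2)}}) =
    {{((n - 1) div 2, (n - 1) div 2)}, {((n::nat) div 2, n div 2)}}"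
proof (cases "even n")
  case True
  then obtain q where "n = 2 * q" by blast
  moreover have "(2 * q - 1) div 2 = q - 1" by (cases q) auto
  ultimately show ?thesis by simp
next
  case False
  then obtain q where "n = 2 * q + 1" by (blast elim: oddE)
  then show ?thesis by simp
qed

theorem corollary2:
  fixes s :: "'a list" and n :: nat
  assumes "n \<ge> 3" and "length s = n" and "distinct s"
  defines "Gs \<equiv> {g. length g = n \<and> distinct g \<and> set g = set s \<and> cat_clusters g \<noteq> cat_clusters s}"
  shows "Max ((\<lambda>g. num_hist g s) ` Gs) =
           catalan (n - 1) - catalan ((n - 1) div 2) * catalan (n div 2) \<and>
         (\<forall>g \<in> Gs. num_hist g s = Max ((\<lambda>g. num_hist g s) ` Gs) \<longleftrightarrow>
           roadblock g s \<in> (if even n then {{(n div 2 - 1, n div 2 - 1)}, {(n div 2, n div 2)}}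
                             else {{((n - 1) div 2, (n - 1) div 2)}}))"
proof -
  define m where "m = n - 1"
  define a where "a = m div 2"
  define V where "V = catalan m - catalan a * catalan (m - a)"
  have max: "num_hist g s \<le> V \<and> (num_hist g s = V \<longleftrightarrow> roadblock g s \<in> {{(a, a)}, {(m - a, m - a)}})"
    if "g \<in> Gs" for g
  proof -
    interpret caterpillar_pair g s
      using that assms(2,3) unfolding Gs_def by unfold_locales auto
    show ?thesis
      using num_hist_max that assms(2) unfolding Gs_def V_def a_def m_def by auto
  qed
  have "1 \<le> a" "Suc a < length s"
    unfolding a_def m_def using assms(1,2) by auto
  then obtain t where t: "t \<in> Gs" "roadblock t s = {(a, a)}"
    using exists_single_roadblock[OF assms(3)] assms(2) unfolding Gs_def by blast
  have "finite Gs"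
    by (rule finite_subset[of _ "{xs. set xs \<subseteq> set s \<and> length xs = n}"])
      (auto simp: Gs_def finite_lists_length_eq)
  then have "Max ((\<lambda>g. num_hist g s) ` Gs) = V"
    using max t by (intro Max_eqI) auto
  moreover have "m - a = n div 2"
    unfolding a_def m_def by (rule diff_half_pred)
  ultimately show ?thesis
    using max middle_diagonal_points[of n] unfolding V_def a_def m_def by simp
qed

end
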